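(* For any numbers $\Lambda\geq1$ and $d>0$ there exists a constant $C$ such that the following holds for any $\bar x\in S^2$ and any $\bar r\in(0,\pi/2]$. Let $\rho_{\bar x,\bar r}$ be the conformal factor of the Möbius transform corresponding to a dilation at $\bar x$ that maps $B_{\bar r}(\bar x)$ onto a hemisphere. Then for any $x\in B_{\Lambda\bar r}(\bar x)$ and any $r\in(d\bar r,\bar r)$, \[ \|d\varphi_{x,r}\|_{L^\infty(S^2,\rho_{\bar x,\bar r}^2g_{S^2})}\leq C. \]
   Context: $S^2\subset\mathbb{R}^3$ is the unit sphere with round metric $g_{S^2}$ and $B_r(x)$ denotes a geodesic ball. $(\varphi_{x,r})_{x\in S^2,\,r\in(0,\pi/2]}$ is a fixed family of cut-off functions with $\varphi_{x,r}\in C^\infty_0(B_r(x),[0,1])$, $\varphi_{x,r}\equiv1$ on $B_{r/2}(x)$ and $\|d\varphi_{x,r}\|_{L^\infty(S^2,g_{S^2})}\leq C_*r^{-1}$ for a universal constant $C_*$. The conformal factor of a Möbius transform $M$ is $\rho_M=\frac1{\sqrt2}|\nabla M|$, so that $M^*g_{S^2}=\rho_M^2g_{S^2}$; for $\bar r=\pi/2$ the dilation is the identity and $\rho=1$. *)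

theory Defs
  imports "HOL-Analysis.Analysis"
begin

type_synonym R3 = "real^3"

definition S2 :: "R3 set" where
  "S2 = {y. norm y = 1}"

definition gdist :: "R3 \<Rightarrow> R3 \<Rightarrow> real" where
  "gdist x y = arccos (x \<bullet> y)"

definition gball :: "R3 \<Rightarrow> real \<Rightarrow> R3 set" where
  "gball x r = {y \<in> S2. gdist x y < r}"

text \<open>A function on S2 is represented by a function on R3; only its values on S2 matter,
  since we always compose with the radial projection z / |z| onto S2.\<close>
definition radial :: "(R3 \<Rightarrow> 'b) \<Rightarrow> R3 \<Rightarrow> 'b" where
  "radial f z = f (z /\<^sub>R norm z)"

definition pderiv3 :: "3 \<Rightarrow> (R3 \<Rightarrow> real) \<Rightarrow> R3 \<Rightarrow> real" where
  "pderiv3 i f z = frechet_derivative f (at z) (axis i 1)"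

definition smooth_on3 :: "R3 set \<Rightarrow> (R3 \<Rightarrow> real) \<Rightarrow> bool" where
  "smooth_on3 U f \<longleftrightarrow> (\<forall>is. (fold pderiv3 is f) differentiable_on U)"

definition smooth_S2 :: "(R3 \<Rightarrow> real) \<Rightarrow> bool" where
  "smooth_S2 f \<longleftrightarrow> smooth_on3 (- {0}) (radial f)"

text \<open>Pointwise norm of the differential df(y) with respect to the round metric g_S2:
  the operator norm of the differential restricted to the tangent space T_y S2
  (the derivative of the radial extension at y is df(y) composed with the tangential projection).\<close>
definition dnorm :: "(R3 \<Rightarrow> real) \<Rightarrow> R3 \<Rightarrow> real" where
  "dnorm f y = onorm (frechet_derivative (radial f) (at y))"

text \<open>Pointwise norm of the covector df(y) w.r.t. the conformal metric rho^2 g_S2.\<close>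
definition dnorm_conf :: "(R3 \<Rightarrow> real) \<Rightarrow> (R3 \<Rightarrow> real) \<Rightarrow> R3 \<Rightarrow> real" where
  "dnorm_conf rho f y = dnorm f y / rho y"

text \<open>Stereographic projection of S2 from the antipode -xb onto the plane orthogonal to xb
  (through the origin), and its inverse.\<close>
definition stereo :: "R3 \<Rightarrow> R3 \<Rightarrow> R3" where
  "stereo xb y = (1 / (1 + y \<bullet> xb)) *\<^sub>R (y - (y \<bullet> xb) *\<^sub>R xb)"

definition stereo_inv :: "R3 \<Rightarrow> R3 \<Rightarrow> R3" where
  "stereo_inv xb w = (1 / (1 + (norm w)\<^sup>2)) *\<^sub>R (2 *\<^sub>R w + (1 - (norm w)\<^sup>2) *\<^sub>R xb)"

text \<open>The Moebius transform given by the dilation at xb by factor 1/tan(rb/2): it maps the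
  geodesic ball B_rb(xb) onto the hemisphere centred at xb (and is the identity for rb = pi/2).\<close>
definition mobius_dil :: "R3 \<Rightarrow> real \<Rightarrow> R3 \<Rightarrow> R3" where
  "mobius_dil xb rb y =
     (if y = - xb then - xb else stereo_inv xb ((1 / tan (rb / 2)) *\<^sub>R stereo xb y))"

text \<open>Conformal factor rho_M = |nabla M| / sqrt 2 of a map M : S2 -> S2, where |nabla M|(y) is the
  Hilbert-Schmidt norm of dM(y) on T_y S2 (computed via the radial extension).\<close>
definition conf_factor :: "(R3 \<Rightarrow> R3) \<Rightarrow> R3 \<Rightarrow> real" where
  "conf_factor M y =
     (1 / sqrt 2) * sqrt (\<Sum>i\<in>Basis. (norm (frechet_derivative (radial M) (at y) i))\<^sup>2)"

definition rho_dil :: "R3 \<Rightarrow> real \<Rightarrow> R3 \<Rightarrow> real" where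
  "rho_dil xb rb = conf_factor (mobius_dil xb rb)"

definition cutoff_family :: "(R3 \<Rightarrow> real \<Rightarrow> R3 \<Rightarrow> real) \<Rightarrow> real \<Rightarrow> bool" where
  "cutoff_family phi Cs \<longleftrightarrow>
     (\<forall>x\<in>S2. \<forall>r\<in>{0<..pi/2}.
        smooth_S2 (phi x r)
      \<and> closure {y\<in>S2. phi x r y \<noteq> 0} \<subseteq> gball x r
      \<and> (\<forall>y\<in>S2. 0 \<le> phi x r y \<and> phi x r y \<le> 1)
      \<and> (\<forall>y\<in>gball x (r/2). phi x r y = 1)
      \<and> (\<forall>y\<in>S2. dnorm (phi x r) y \<le> Cs / r))"

end

theory Submission
  imports Defs
begin

text \<open>Write \<lambda> = 1 / tan (rb/2) and s = y \<bullet> xb. The Moebius dilation stretches every tangent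
  vector at y that is also orthogonal to xb by the factor 2 \<lambda> / D(y), where
  D(y) = (1 + s) + \<lambda>^2 (1 - s); hence its conformal factor is at least sqrt 2 \<lambda> / D(y).
  The differential of \<phi>(x,r) vanishes off its support, and on the support y lies within
  chordal distance (\<Lambda> + 1) rb of xb. As \<lambda> rb \<le> 2, this bounds D(y) by 2 + 2 (\<Lambda> + 1)^2,
  and together with |d\<phi>(x,r)| \<le> Cs / r, tan (rb/2) \<le> rb and r > d rb the conformal
  norm of d\<phi>(x,r) is at most |Cs| (2 + 2 (\<Lambda> + 1)^2) / d.\<close>

lemma abs_inner_le_1_unit:
  fixes x y :: "'a::real_inner"
  assumes "norm x = 1" "norm y = 1"
  shows "\<bar>x \<bullet> y\<bar> \<le> 1"
  using Cauchy_Schwarz_ineq2[of x y] assms by simp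

lemma norm_diff_unit_squared:
  fixes x y :: "'a::real_inner"
  assumes "norm x = 1" "norm y = 1"
  shows "(norm (x - y))\<^sup>2 = 2 - 2 * (x \<bullet> y)"
proof -
  have "x \<bullet> x = 1" "y \<bullet> y = 1" using assms by (simp_all add: dot_square_norm)
  then show ?thesis
    by (simp add: power2_norm_eq_inner inner_diff_left inner_diff_right inner_commute)
qed

lemma unit_inner_eq_neg1_imp_antipodal:
  fixes x y :: "'a::real_inner"
  assumes "norm x = 1" "norm y = 1" "y \<bullet> x = -1"
  shows "y = - x"
proof -
  have "(norm (y - (- x)))\<^sup>2 = 0"
    using norm_diff_unit_squared[of y "- x"] assms by simp
  then show ?thesis by (simp add: eq_neg_iff_add_eq_0)
qed

lemma one_minus_cos_le: "1 - cos (t::real) \<le> t\<^sup>2 / 2"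
proof -
  have "\<bar>sin (t/2)\<bar> \<le> \<bar>t/2\<bar>" by (rule abs_sin_x_le_abs_x)
  then have "(sin (t/2))\<^sup>2 \<le> (t/2)\<^sup>2" by (simp only: abs_le_square_iff)
  moreover have "cos t = 1 - 2 * (sin (t/2))\<^sup>2" using cos_double_sin[of "t/2"] by simp
  ultimately show ?thesis by (simp add: power_divide)
qed

lemma chord_le_gdist:
  assumes "x \<in> S2" "y \<in> S2"
  shows "norm (x - y) \<le> gdist x y"
proof -
  have nx: "norm x = 1" and ny: "norm y = 1" using assms by (auto simp: S2_def)
  have c: "-1 \<le> x \<bullet> y" "x \<bullet> y \<le> 1" using abs_inner_le_1_unit[OF nx ny] by auto
  have "(norm (x - y))\<^sup>2 = 2 * (1 - cos (gdist x y))"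
    using norm_diff_unit_squared[OF nx ny] c by (simp add: gdist_def)
  also have "\<dots> \<le> (gdist x y)\<^sup>2" using one_minus_cos_le[of "gdist x y"] by simp
  finally show ?thesis
    using c arccos_lbound[of "x \<bullet> y"] by (simp add: gdist_def abs_le_square_iff[symmetric])
qed

lemma tan_half_bounds:
  assumes "0 < t" "t \<le> pi/2"
  shows "0 < tan (t/2)" "t/2 \<le> tan (t/2)" "tan (t/2) \<le> t"
proof -
  have t: "0 < t/2" "t/2 < pi/2" using assms pi_gt3 by auto
  show pos: "0 < tan (t/2)" using t by (simp add: tan_gt_zero)
  have "arctan (tan (t/2)) = t/2" using t by (intro arctan_tan) auto
  then show "t/2 \<le> tan (t/2)" using arctan_le_self[of "tan (t/2)"] pos by simp
  have "(t/2)\<^sup>2 \<le> (pi/4)\<^sup>2" using t assms by (intro power_mono) auto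
  also have "\<dots> < 1" using pi_less_4 pi_gt3 power_strict_mono[of "pi/4" 1 2] by simp
  finally have "cos (t/2) > 1/2" using one_minus_cos_le[of "t/2"] by simp
  moreover have "sin (t/2) \<le> t/2" using t by (intro sin_x_le_x) simp
  ultimately have "sin (t/2) / cos (t/2) \<le> (t/2) / (1/2)"
    using t sin_gt_zero[of "t/2"] by (intro frac_le) auto
  then show "tan (t/2) \<le> t" by (simp add: tan_def)
qed

lemma dnorm_eq_0_off_support:
  assumes y: "y \<in> S2" and off: "y \<notin> closure {z \<in> S2. f z \<noteq> 0}"
  shows "dnorm f y = 0"
proof -
  obtain e where e: "e > 0" and far: "\<And>z. z \<in> S2 \<Longrightarrow> f z \<noteq> 0 \<Longrightarrow> e \<le> dist z y"
    using off unfolding closure_approachable by (metis (mono_tags, lifting) mem_Collect_eq not_less)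
  define \<delta> where "\<delta> = min (e/2) (1/2)"
  have \<delta>: "\<delta> > 0" using e by (simp add: \<delta>_def)
  have vanish: "radial f w = 0" if "w \<in> ball y \<delta>" for w
  proof -
    have wy: "norm (w - y) < \<delta>" using that by (simp add: dist_norm norm_minus_commute)
    moreover have "\<bar>norm w - norm y\<bar> \<le> norm (w - y)" by (rule norm_triangle_ineq3)
    ultimately have nw: "\<bar>norm w - 1\<bar> < \<delta>" using y by (simp add: S2_def)
    then have w0: "norm w > 0" by (auto simp: \<delta>_def)
    have "w /\<^sub>R norm w - w = (1 / norm w - 1) *\<^sub>R w" by (simp add: scaleR_diff_left inverse_eq_divide)
    also have "norm \<dots> = \<bar>1 - norm w\<bar>"
      using w0 by (simp add: abs_mult[symmetric] field_simps)
    finally have "dist (w /\<^sub>R norm w) y < e"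
      using dist_triangle[of "w /\<^sub>R norm w" y w] nw wy abs_minus_commute[of 1 "norm w"]
      unfolding dist_norm \<delta>_def by linarith
    moreover have "w /\<^sub>R norm w \<in> S2" using w0 by (simp add: S2_def)
    ultimately show ?thesis using far by (force simp: radial_def)
  qed
  have "(radial f has_derivative (\<lambda>h. 0)) (at y)"
    by (rule has_derivative_transform_within_open[of "\<lambda>w. 0" _ y UNIV "ball y \<delta>"])
      (use \<delta> vanish in auto)
  then show ?thesis by (simp add: dnorm_def frechet_derivative_at[symmetric] onorm_zero)
qed

lemma norm_le_hilbert_schmidt:
  fixes F :: "'a::euclidean_space \<Rightarrow> 'b::real_normed_vector"
  assumes "linear F" "norm e = 1"
  shows "norm (F e) \<le> sqrt (\<Sum>i\<in>Basis. (norm (F i))\<^sup>2)"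
proof -
  have "F e = F (\<Sum>i\<in>Basis. (e \<bullet> i) *\<^sub>R i)" by (simp add: euclidean_representation)
  also have "\<dots> = (\<Sum>i\<in>Basis. (e \<bullet> i) *\<^sub>R F i)"
    using assms(1) by (simp add: linear_sum linear_cmul)
  finally have "norm (F e) \<le> (\<Sum>i\<in>Basis. norm ((e \<bullet> i) *\<^sub>R F i))"
    by (simp only: norm_sum)
  also have "\<dots> = (\<Sum>i\<in>Basis. \<bar>e \<bullet> i\<bar> * \<bar>norm (F i)\<bar>)" by simp
  also have "\<dots> \<le> L2_set (\<lambda>i. e \<bullet> i) Basis * L2_set (\<lambda>i. norm (F i)) Basis"
    by (rule L2_set_mult_ineq)
  also have "L2_set (\<lambda>i. e \<bullet> i) Basis = 1"
    using assms(2) euclidean_inner[of e e]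
    by (simp add: L2_set_def power2_eq_square dot_square_norm)
  finally show ?thesis by (simp add: L2_set_def)
qed

lemma exists_unit_orthogonal_pair:
  fixes a b :: "'a::euclidean_space"
  assumes "DIM('a) \<ge> 3"
  obtains e where "norm e = 1" "e \<bullet> a = 0" "e \<bullet> b = 0"
proof -
  have "dim {a, b} \<le> card {a, b}" by (rule dim_le_card) (auto intro: span_base)
  also have "\<dots> \<le> 2" by (simp add: card_insert_le_m1)
  finally have "dim {a, b} < DIM('a)" using assms by simp
  then obtain x where x: "x \<noteq> 0" "\<And>y. y \<in> span {a, b} \<Longrightarrow> orthogonal x y"
    using orthogonal_to_subspace_exists by blast
  have "orthogonal x a" "orthogonal x b" using x(2) by (auto intro: span_base)
  with x(1) show ?thesis
    by (intro that[of "x /\<^sub>R norm x"]) (simp_all add: orthogonal_def)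
qed

definition dil_denom :: "R3 \<Rightarrow> real \<Rightarrow> R3 \<Rightarrow> real" where
  "dil_denom xb lam z = (1 + z \<bullet> xb) + lam\<^sup>2 * (1 - z \<bullet> xb)"

text \<open>The composite of stereo, scaling by lam and stereo_inv, written in terms of s = z \<bullet> xb;
  unlike mobius_dil it needs no case distinction at the antipode - xb.\<close>
definition dil_map :: "R3 \<Rightarrow> real \<Rightarrow> R3 \<Rightarrow> R3" where
  "dil_map xb lam z = (1 / dil_denom xb lam z) *\<^sub>R ((2 * lam) *\<^sub>R (z - (z \<bullet> xb) *\<^sub>R xb)
      + ((1 + z \<bullet> xb) - lam\<^sup>2 * (1 - z \<bullet> xb)) *\<^sub>R xb)"

lemma dil_denom_pos:
  assumes "norm xb = 1" "norm y = 1" "lam > 0"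
  shows "dil_denom xb lam y > 0"
proof (cases "y \<bullet> xb = -1")
  case True
  then show ?thesis using assms by (simp add: dil_denom_def)
next
  case False
  then show ?thesis
    using abs_inner_le_1_unit[OF assms(2,1)] assms(3)
    by (simp add: dil_denom_def add_pos_nonneg)
qed

lemma stereo_dilation_eq_dil_map:
  assumes xb: "norm xb = 1" and y: "norm y = 1" and lam: "lam \<noteq> 0"
  shows "(if y = - xb then - xb else stereo_inv xb (lam *\<^sub>R stereo xb y)) = dil_map xb lam y"
proof (cases "y = - xb")
  case True
  then show ?thesis using xb lam by (simp add: dil_map_def dil_denom_def dot_square_norm)
next
  case False
  define s where "s = y \<bullet> xb"
  define v where "v = y - s *\<^sub>R xb"
  have "s \<noteq> -1" using unit_inner_eq_neg1_imp_antipodal[OF xb y] False s_def by auto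
  then have s: "1 + s > 0" using abs_inner_le_1_unit[OF y xb] s_def by auto
  have "xb \<bullet> xb = 1" "y \<bullet> y = 1" using xb y by (simp_all add: dot_square_norm)
  then have v_sq: "v \<bullet> v = 1 - s\<^sup>2"
    by (simp add: v_def s_def inner_diff_left inner_diff_right inner_commute power2_eq_square)
  define q where "q = lam\<^sup>2 * (1 - s) / (1 + s)"
  have norm_v: "(norm v)\<^sup>2 = 1 - s\<^sup>2" using v_sq by (simp add: power2_norm_eq_inner)
  have "(norm (lam *\<^sub>R ((1 / (1 + s)) *\<^sub>R v)))\<^sup>2 = lam\<^sup>2 * (norm v)\<^sup>2 / (1 + s)\<^sup>2"
    using s by (simp add: power_mult_distrib power_divide)
  also have "\<dots> = lam\<^sup>2 * ((1 - s) * (1 + s)) / ((1 + s) * (1 + s))"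
    unfolding norm_v by (simp add: power2_eq_square algebra_simps)
  also have "\<dots> = q" using s by (simp add: q_def)
  finally have nv: "(norm (lam *\<^sub>R ((1 / (1 + s)) *\<^sub>R v)))\<^sup>2 = q" .
  have st: "stereo xb y = (1 / (1 + s)) *\<^sub>R v" by (simp add: stereo_def s_def v_def)
  have D: "dil_denom xb lam y = (1 + s) * (1 + q)"
    using s by (simp add: dil_denom_def q_def s_def field_simps)
  have "stereo_inv xb (lam *\<^sub>R stereo xb y) =
      (1 / (1 + q)) *\<^sub>R (2 *\<^sub>R (lam *\<^sub>R ((1 / (1 + s)) *\<^sub>R v)) + (1 - q) *\<^sub>R xb)"
    unfolding stereo_inv_def st nv ..
  also have "\<dots> = (1 / dil_denom xb lam y) *\<^sub>R
      ((2 * lam) *\<^sub>R v + ((1 + s) - lam\<^sup>2 * (1 - s)) *\<^sub>R xb)"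
    using s unfolding D by (simp add: scaleR_add_right q_def) (simp add: field_simps)
  finally show ?thesis using False by (simp add: dil_map_def s_def v_def)
qed

lemma radial_mobius_dil_eq:
  assumes xb: "norm xb = 1" and rb: "0 < rb" "rb \<le> pi/2" and z: "z \<noteq> 0"
  shows "radial (mobius_dil xb rb) z = dil_map xb (1 / tan (rb/2)) (z /\<^sub>R norm z)"
  unfolding radial_def mobius_dil_def
  by (rule stereo_dilation_eq_dil_map[OF xb]) (use z tan_half_bounds[OF rb] in simp_all)

lemma dil_map_normalized_tangent_derivative:
  assumes F: "((\<lambda>z. dil_map xb lam (z /\<^sub>R norm z)) has_derivative F) (at p)"
    and p: "norm p = 1" and e: "e \<bullet> xb = 0" "e \<bullet> p = 0" and D: "dil_denom xb lam p \<noteq> 0"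
  shows "F e = (2 * lam / dil_denom xb lam p) *\<^sub>R e"
proof -
  have p0: "p \<noteq> 0" "norm p \<noteq> 0" using p by auto
  have D': "1 + (p /\<^sub>R norm p) \<bullet> xb + lam\<^sup>2 * (1 - (p /\<^sub>R norm p) \<bullet> xb) \<noteq> 0"
    using D p by (simp add: dil_denom_def)
  show ?thesis
    apply (rule trans[OF fun_cong[OF has_derivative_unique[OF F]]])
    unfolding dil_map_def dil_denom_def
     apply (rule derivative_eq_intros refl has_derivative_norm[OF p0(1)] p0 D')+
    using p e by (simp add: sgn_div_norm inner_add_left inner_diff_left inner_commute
        divide_inverse dil_denom_def)
qed

lemma rho_dil_lower_bound:
  assumes xb: "xb \<in> S2" and y: "y \<in> S2" and rb: "0 < rb" "rb \<le> pi/2"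
  defines "lam \<equiv> 1 / tan (rb/2)"
  shows "sqrt 2 * lam / dil_denom xb lam y \<le> rho_dil xb rb y"
proof -
  have nxb: "norm xb = 1" and ny: "norm y = 1" using xb y by (auto simp: S2_def)
  have lam: "lam > 0" using tan_half_bounds[OF rb] by (simp add: lam_def)
  have D: "dil_denom xb lam y > 0" by (rule dil_denom_pos[OF nxb ny lam])
  have y0: "y \<noteq> 0" "norm y \<noteq> 0" using ny by auto
  have D': "1 + (y /\<^sub>R norm y) \<bullet> xb + lam\<^sup>2 * (1 - (y /\<^sub>R norm y) \<bullet> xb) \<noteq> 0"
    using D ny by (simp add: dil_denom_def)
  have "(\<lambda>z. dil_map xb lam (z /\<^sub>R norm z)) differentiable (at y)"
    unfolding dil_map_def dil_denom_def using y0 D' by (intro derivative_intros) auto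
  then obtain F where F: "((\<lambda>z. dil_map xb lam (z /\<^sub>R norm z)) has_derivative F) (at y)"
    unfolding differentiable_def by blast
  have "(radial (mobius_dil xb rb) has_derivative F) (at y)"
    by (rule has_derivative_transform_within_open[OF F, of "- {0}"])
      (use y0 radial_mobius_dil_eq[OF nxb rb] in \<open>auto simp: lam_def\<close>)
  then have dM: "frechet_derivative (radial (mobius_dil xb rb)) (at y) = F" and "linear F"
    by (auto simp: frechet_derivative_at[symmetric] has_derivative_linear)
  obtain e where e: "norm e = 1" "e \<bullet> xb = 0" "e \<bullet> y = 0"
    using exists_unit_orthogonal_pair[of xb y] by auto
  have "norm (F e) = 2 * lam / dil_denom xb lam y"
    using dil_map_normalized_tangent_derivative[OF F ny e(2,3)] D lam e(1) by simp
  then have "2 * lam / dil_denom xb lam y \<le> sqrt (\<Sum>i\<in>Basis. (norm (F i))\<^sup>2)"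
    using norm_le_hilbert_schmidt[OF \<open>linear F\<close> e(1)] by simp
  then have "(1 / sqrt 2) * (2 * lam / dil_denom xb lam y) \<le> rho_dil xb rb y"
    unfolding rho_dil_def conf_factor_def dM by (rule mult_left_mono) simp
  moreover have "(1 / sqrt 2) * (2 * lam / dil_denom xb lam y) = sqrt 2 * lam / dil_denom xb lam y"
    using D by (simp add: field_simps)
  ultimately show ?thesis by simp
qed

lemma dil_denom_le_near_center:
  assumes xb: "xb \<in> S2" and y: "y \<in> S2" and rb: "0 < rb" "rb \<le> pi/2"
    and near: "norm (xb - y) \<le> c * rb" and c: "0 \<le> c"
  shows "dil_denom xb (1 / tan (rb/2)) y \<le> 2 + 2 * c\<^sup>2"
proof -
  define lam where "lam = 1 / tan (rb/2)"
  have nxb: "norm xb = 1" and ny: "norm y = 1" using xb y by (auto simp: S2_def)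
  have lam: "0 < lam" "lam * rb \<le> 2" using tan_half_bounds[OF rb] by (auto simp: lam_def field_simps)
  have "lam * norm (xb - y) \<le> lam * (c * rb)" using near lam by simp
  also have "\<dots> = c * (lam * rb)" by simp
  also have "\<dots> \<le> c * 2" using lam c by (intro mult_left_mono) auto
  finally have "(lam * norm (xb - y))\<^sup>2 \<le> (c * 2)\<^sup>2" using lam by (intro power_mono) auto
  moreover have "lam\<^sup>2 * (1 - y \<bullet> xb) = (lam * norm (xb - y))\<^sup>2 / 2"
    using norm_diff_unit_squared[OF nxb ny] by (simp add: power_mult_distrib inner_commute)
  moreover have "1 + y \<bullet> xb \<le> 2" using abs_inner_le_1_unit[OF ny nxb] by auto
  ultimately show ?thesis by (simp add: dil_denom_def lam_def power_mult_distrib)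
qed

lemma cutoff_dnorm_eq_0_outside:
  assumes "cutoff_family phi Cs" "x \<in> S2" "r \<in> {0<..pi/2}" "y \<in> S2" "r \<le> gdist x y"
  shows "dnorm (phi x r) y = 0"
proof (rule dnorm_eq_0_off_support)
  have "closure {z \<in> S2. phi x r z \<noteq> 0} \<subseteq> gball x r"
    using assms(1-3) by (simp add: cutoff_family_def)
  then show "y \<notin> closure {z \<in> S2. phi x r z \<noteq> 0}" using assms(5) by (auto simp: gball_def)
qed (use assms in simp)

lemma dil_denom_le_on_cutoff_support:
  assumes cf: "cutoff_family phi Cs" and xb: "xb \<in> S2" and rb: "0 < rb" "rb \<le> pi/2"
    and x: "x \<in> gball xb (\<Lambda> * rb)" and r: "0 < r" "r < rb"
    and y: "y \<in> S2" and supp: "dnorm (phi x r) y \<noteq> 0"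
  shows "dil_denom xb (1 / tan (rb/2)) y \<le> 2 + 2 * (\<Lambda> + 1)\<^sup>2"
proof (rule dil_denom_le_near_center[OF xb y rb])
  have xS: "x \<in> S2" and xb_x: "gdist xb x < \<Lambda> * rb" using x by (auto simp: gball_def)
  have "gdist x y < r"
    using cutoff_dnorm_eq_0_outside[OF cf xS _ y] supp r rb by force
  then show "norm (xb - y) \<le> (\<Lambda> + 1) * rb"
    using xb_x norm_triangle_ineq[of "xb - x" "x - y"] chord_le_gdist[OF xb xS]
      chord_le_gdist[OF xS y] r by (simp add: algebra_simps)
  \<comment> \<open>No lower bound on \<Lambda> is needed: the ball gball xb (\<Lambda> * rb) is empty unless \<Lambda> > 0.\<close>
  have "0 < \<Lambda> * rb"
    using xb_x chord_le_gdist[OF xb xS] norm_ge_zero[of "xb - x"] by linarith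
  then show "0 \<le> \<Lambda> + 1" using rb by (simp add: zero_less_mult_iff)
qed

lemma dnorm_conf_cutoff_le:
  assumes cf: "cutoff_family phi Cs" and d: "0 < d"
    and xb: "xb \<in> S2" and rb: "rb \<in> {0<..pi/2}" and x: "x \<in> gball xb (\<Lambda> * rb)"
    and r: "r \<in> {d * rb<..<rb}" and y: "y \<in> S2"
  shows "dnorm_conf (rho_dil xb rb) (phi x r) y \<le> \<bar>Cs\<bar> * (2 + 2 * (\<Lambda> + 1)\<^sup>2) / d"
proof -
  define K where "K = 2 + 2 * (\<Lambda> + 1)\<^sup>2"
  define t where "t = tan (rb/2)"
  define D where "D = dil_denom xb (1 / t) y"
  define a where "a = dnorm (phi x r) y"
  have rb': "0 < rb" "rb \<le> pi/2" using rb by auto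
  have r': "0 < r" "r < rb" "d * rb < r" using r d rb' by (auto intro: less_trans[of 0 "d * rb"])
  have xS: "x \<in> S2" using x by (simp add: gball_def)
  have t: "0 < t" "t \<le> rb" using tan_half_bounds[OF rb'] by (auto simp: t_def)
  have nxb: "norm xb = 1" and ny: "norm y = 1" using xb y by (auto simp: S2_def)
  have D: "0 < D" unfolding D_def using dil_denom_pos[OF nxb ny] t by simp
  have rho: "sqrt 2 * (1 / t) / D \<le> rho_dil xb rb y"
    using rho_dil_lower_bound[OF xb y rb'] by (simp add: D_def t_def)
  have rho0: "0 < sqrt 2 * (1 / t) / D" using t D by simp
  show ?thesis
  proof (cases "a \<le> 0")
    case True
    then have "a / rho_dil xb rb y \<le> 0" using rho rho0 by (simp add: divide_nonpos_pos)
    also have "0 \<le> \<bar>Cs\<bar> * K / d" using d by (simp add: K_def)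
    finally show ?thesis by (simp add: dnorm_conf_def a_def K_def)
  next
    case False
    then have DK: "D \<le> K"
      using dil_denom_le_on_cutoff_support[OF cf xb rb' x r'(1,2) y]
      by (simp add: D_def K_def t_def a_def)
    have aC: "a \<le> Cs / r" using cf xS r' rb' y by (simp add: cutoff_family_def a_def)
    have Cs: "0 \<le> Cs" using False aC r' zero_less_divide_iff[of Cs r] by linarith
    have "a / rho_dil xb rb y \<le> (Cs / r) / (sqrt 2 * (1 / t) / D)"
      using False aC rho rho0 by (intro frac_le) auto
    also have "\<dots> = (Cs / r) * (D * t / sqrt 2)" using t D by (simp add: field_simps)
    also have "\<dots> \<le> (Cs / r) * (K * rb)"
    proof (intro mult_left_mono)
      have "D * t / sqrt 2 \<le> D * t"
        using mult_pos_pos[OF D t(1)] by (simp add: divide_le_eq mult_le_cancel_left1)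
      also have "\<dots> \<le> K * rb" using D t DK by (intro mult_mono) auto
      finally show "D * t / sqrt 2 \<le> K * rb" .
    qed (use Cs r' in simp)
    also have "\<dots> = Cs * K * (rb / r)" by simp
    also have "\<dots> \<le> Cs * K * (1 / d)"
      using Cs r' d by (intro mult_left_mono) (auto simp: K_def field_simps)
    finally show ?thesis using Cs by (simp add: dnorm_conf_def a_def K_def)
  qed
qed

theorem lemma3p1:
  fixes phi :: "R3 \<Rightarrow> real \<Rightarrow> R3 \<Rightarrow> real" and Cs :: real
  assumes "cutoff_family phi Cs"
  shows "\<forall>\<Lambda> d. \<Lambda> \<ge> 1 \<and> d > 0 \<longrightarrow>
           (\<exists>C. \<forall>xb\<in>S2. \<forall>rb\<in>{0<..pi/2}. \<forall>x\<in>gball xb (\<Lambda> * rb). \<forall>r\<in>{d * rb<..<rb}.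
              \<forall>y\<in>S2. dnorm_conf (rho_dil xb rb) (phi x r) y \<le> C)"
  using dnorm_conf_cutoff_le[OF assms] by blast

end
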